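(* For each finite set $\tau\subseteq\mathbb{S}$ and each $s\in\mathbb{S}$ there is an MSO sentence $\phi$ over $\mathbb{R}_{\mathrm{tree}}(\mathbb{B}^\tau_{\mathrm{parse}})$ such that for every tree $T\in\mathcal{T}(\mathbb{B}^\tau_{\mathrm{parse}})$: $\|T\|\models\phi$ iff the graph $\mathbf{val}(T)$ has an $s$-source.
   Context: Graphs over a countably infinite set $\mathbb{S}$ of source labels and finite set $\mathbb{A}$ of edge labels: isomorphism classes of finite $\mathbb{A}$-labelled hypergraphs with an injective map $\xi$ from a finite sort into the vertices ($\xi(s)$ is the $s$-source). HR operations: $\mathbf{0}_\sigma$ (one $s$-source for each $s\in\sigma$), $\mathbf{a}_{(s_1,\ldots,s_{\#a})}$ (one $a$-edge on $s_i$-sources), $\mathsf{restrict}_\sigma$ (forget source labels outside $\sigma$; sort $\sigma'\mapsto\sigma\cap\sigma'$), $\mathsf{rename}_\alpha$ ($\alpha$ finite permutation of $\mathbb{S}$; source map $\xi\circ\alpha$), $\parallel$ (disjoint union fusing equally-labelled sources). Trees: with root label $\mathfrak{r}$, trees over an alphabet $\mathbb{B}$ of unary/binary labels are values of ground terms over $\mathbf{c}$ (root with unary $c$-edge), $\mathsf{append}_b$ (new root with a $b$-edge to the old root), $\parallel$ (fuse roots); $\mathcal{T}(\mathbb{B})$ is their set; a tree $T$ is encoded by $\|T\|$ with universe nodes $\cup$ edges over $\mathbb{R}_{\mathrm{tree}}(\mathbb{B})=\{r_b\}_{b\in\mathbb{B}}\cup\{r_\mathfrak{r}\}$ ($r_b(e,\bar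 n)$: $e$ is a $b$-edge on $\bar n$; $r_\mathfrak{r}$: the root). $\mathbb{B}^\tau_{\mathrm{parse}}$: unary labels $\underline{\mathbf{0}}_{\sigma}$ ($\sigma\subseteq\tau$), $\underline{\mathbf{a}}_{(s_1..)}$ ($s_i\in\tau$), binary labels $\underline{\mathsf{restrict}}_{\sigma}$ ($\sigma\subseteq\tau$), $\underline{\mathsf{rename}}_\alpha$ ($\alpha$ fixing everything outside $\tau$). $\mathbf{val}(T)$ is the value of the HR term obtained from a tree term for $T$ by replacing $\underline{\mathbf{c}}$ by $\mathbf{c}$ and $\mathsf{append}_{\underline b}$ by the HR operation $b$. *)

theory Defs
  imports Main
begin

section \<open>Graphs with sources (concrete representatives of isomorphism classes)\<close>

text \<open>Source labels: the countably infinite set nat.  Edge labels: a finite type 'a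
  with an arity function ar.  Vertices and edges are represented by natural numbers;
  gsrc is the (partial, injective) source map; its domain is the sort.\<close>

record 'a hgraph =
  gV   :: "nat set"
  gE   :: "nat set"
  glab :: "nat \<Rightarrow> 'a"
  gatt :: "nat \<Rightarrow> nat list"
  gsrc :: "nat \<Rightarrow> nat option"

definition has_source :: "'a hgraph \<Rightarrow> nat \<Rightarrow> bool" where
  "has_source G s \<longleftrightarrow> gsrc G s \<noteq> None"

definition hr_zero :: "nat set \<Rightarrow> 'a hgraph" where
  "hr_zero \<sigma> = \<lparr>gV = \<sigma>, gE = {}, glab = (\<lambda>_. undefined), gatt = (\<lambda>_. []),
     gsrc = (\<lambda>s. if s \<in> \<sigma> then Some s else None)\<rparr>"

definition hr_edge :: "'a \<Rightarrow> nat list \<Rightarrow> 'a hgraph" where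
  "hr_edge a ss = \<lparr>gV = set ss, gE = {0}, glab = (\<lambda>_. a), gatt = (\<lambda>_. ss),
     gsrc = (\<lambda>s. if s \<in> set ss then Some s else None)\<rparr>"

definition hr_restrict :: "nat set \<Rightarrow> 'a hgraph \<Rightarrow> 'a hgraph" where
  "hr_restrict \<sigma> G = G\<lparr>gsrc := (\<lambda>s. if s \<in> \<sigma> then gsrc G s else None)\<rparr>"

definition hr_rename :: "(nat \<Rightarrow> nat) \<Rightarrow> 'a hgraph \<Rightarrow> 'a hgraph" where
  "hr_rename \<alpha> G = G\<lparr>gsrc := gsrc G \<circ> \<alpha>\<rparr>"

text \<open>Parallel composition: vertices of G become 2v, vertices of H become 2v+1,
  except that an s-source of H is fused with the s-source of G when G has one.\<close>

definition par_vmap :: "'a hgraph \<Rightarrow> 'a hgraph \<Rightarrow> nat \<Rightarrow> nat" where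
  "par_vmap G H v =
     (if \<exists>t. gsrc H t = Some v \<and> gsrc G t \<noteq> None
      then 2 * the (gsrc G (SOME t. gsrc H t = Some v \<and> gsrc G t \<noteq> None))
      else 2 * v + 1)"

definition hr_par :: "'a hgraph \<Rightarrow> 'a hgraph \<Rightarrow> 'a hgraph" where
  "hr_par G H =
    \<lparr>gV = (\<lambda>v. 2 * v) ` gV G \<union> par_vmap G H ` gV H,
     gE = (\<lambda>e. 2 * e) ` gE G \<union> (\<lambda>e. 2 * e + 1) ` gE H,
     glab = (\<lambda>e. if even e then glab G (e div 2) else glab H (e div 2)),
     gatt = (\<lambda>e. if even e then map (\<lambda>v. 2 * v) (gatt G (e div 2))
                 else map (par_vmap G H) (gatt H (e div 2))),
     gsrc = (\<lambda>s. case gsrc G s of Some v \<Rightarrow> Some (2 * v)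
                 | None \<Rightarrow> map_option (par_vmap G H) (gsrc H s))\<rparr>"

datatype 'a plabel =
    PZero "nat set"
  | PEdge 'a "nat list"
  | PRestrict "nat set"
  | PRename "nat \<Rightarrow> nat"

definition finite_perm :: "(nat \<Rightarrow> nat) \<Rightarrow> bool" where
  "finite_perm \<alpha> \<longleftrightarrow> bij \<alpha> \<and> finite {x. \<alpha> x \<noteq> x}"

fun parse_unary :: "('a \<Rightarrow> nat) \<Rightarrow> nat set \<Rightarrow> 'a plabel \<Rightarrow> bool" where
  "parse_unary ar \<tau> (PZero \<sigma>) = (\<sigma> \<subseteq> \<tau>)"
| "parse_unary ar \<tau> (PEdge a ss) = (length ss = ar a \<and> distinct ss \<and> set ss \<subseteq> \<tau>)"
| "parse_unary ar \<tau> _ = False"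

fun parse_binary :: "nat set \<Rightarrow> 'a plabel \<Rightarrow> bool" where
  "parse_binary \<tau> (PRestrict \<sigma>) = (\<sigma> \<subseteq> \<tau>)"
| "parse_binary \<tau> (PRename \<alpha>) = (finite_perm \<alpha> \<and> (\<forall>x. x \<notin> \<tau> \<longrightarrow> \<alpha> x = x))"
| "parse_binary \<tau> _ = False"

text \<open>Tree terms: c (root with unary c-edge), append_b, parallel (fuse roots).\<close>

datatype 'b tterm = TC 'b | TApp 'b "'b tterm" | TPar "'b tterm" "'b tterm"

fun wf_tterm :: "('b \<Rightarrow> bool) \<Rightarrow> ('b \<Rightarrow> bool) \<Rightarrow> 'b tterm \<Rightarrow> bool" where
  "wf_tterm U B (TC c) = U c"
| "wf_tterm U B (TApp b t) = (B b \<and> wf_tterm U B t)"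
| "wf_tterm U B (TPar t1 t2) = (wf_tterm U B t1 \<and> wf_tterm U B t2)"

definition parse_tterm :: "('a \<Rightarrow> nat) \<Rightarrow> nat set \<Rightarrow> 'a plabel tterm \<Rightarrow> bool" where
  "parse_tterm ar \<tau> t = wf_tterm (parse_unary ar \<tau>) (parse_binary \<tau>) t"

fun hr_const :: "'a plabel \<Rightarrow> 'a hgraph" where
  "hr_const (PZero \<sigma>) = hr_zero \<sigma>"
| "hr_const (PEdge a ss) = hr_edge a ss"
| "hr_const _ = undefined"

fun hr_unop :: "'a plabel \<Rightarrow> 'a hgraph \<Rightarrow> 'a hgraph" where
  "hr_unop (PRestrict \<sigma>) G = hr_restrict \<sigma> G"
| "hr_unop (PRename \<alpha>) G = hr_rename \<alpha> G"
| "hr_unop _ G = undefined"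

fun val :: "'a plabel tterm \<Rightarrow> 'a hgraph" where
  "val (TC c) = hr_const c"
| "val (TApp b t) = hr_unop b (val t)"
| "val (TPar t1 t2) = hr_par (val t1) (val t2)"

text \<open>Elements: the root node, the node created by append at position p, the edge
  created at position p (by c or by append).\<close>

datatype telem = Root | Nd "nat list" | Ed "nat list"

datatype 'b rsym = RLab 'b | RRoot

fun tuniv :: "'b tterm \<Rightarrow> nat list \<Rightarrow> telem \<Rightarrow> telem set" where
  "tuniv (TC c) p r = {Ed p, r}"
| "tuniv (TApp b t) p r = {Ed p, r} \<union> tuniv t (p @ [2]) (Nd p)"
| "tuniv (TPar t1 t2) p r = tuniv t1 (p @ [0]) r \<union> tuniv t2 (p @ [1]) r"

text \<open>r_b(e, n) for a unary b-edge e on node n; r_b(e, new root, old root) for a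
  binary b-edge created by append_b.\<close>

fun tfacts :: "'b tterm \<Rightarrow> nat list \<Rightarrow> telem \<Rightarrow> ('b rsym \<times> telem list) set" where
  "tfacts (TC c) p r = {(RLab c, [Ed p, r])}"
| "tfacts (TApp b t) p r = {(RLab b, [Ed p, r, Nd p])} \<union> tfacts t (p @ [2]) (Nd p)"
| "tfacts (TPar t1 t2) p r = tfacts t1 (p @ [0]) r \<union> tfacts t2 (p @ [1]) r"

definition enc_univ :: "'b tterm \<Rightarrow> telem set" where
  "enc_univ t = tuniv t [] Root"

definition enc_rel :: "'b tterm \<Rightarrow> ('b rsym \<times> telem list) set" where
  "enc_rel t = insert (RRoot, [Root]) (tfacts t [] Root)"

fun rtree_parse_ar :: "('a \<Rightarrow> nat) \<Rightarrow> nat set \<Rightarrow> 'a plabel rsym \<Rightarrow> nat option" where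
  "rtree_parse_ar ar \<tau> RRoot = Some 1"
| "rtree_parse_ar ar \<tau> (RLab b) =
     (if parse_unary ar \<tau> b then Some 2 else if parse_binary \<tau> b then Some 3 else None)"

datatype 'r mso =
    Atom 'r "nat list"
  | FEq nat nat
  | FMem nat nat
  | FNeg "'r mso"
  | FConj "'r mso" "'r mso"
  | FEx nat "'r mso"
  | SEx nat "'r mso"

fun msat :: "'e set \<Rightarrow> ('r \<times> 'e list) set \<Rightarrow> (nat \<Rightarrow> 'e) \<Rightarrow> (nat \<Rightarrow> 'e set) \<Rightarrow> 'r mso \<Rightarrow> bool" where
  "msat U I f X (Atom r xs) = ((r, map f xs) \<in> I)"
| "msat U I f X (FEq x y) = (f x = f y)"
| "msat U I f X (FMem x Y) = (f x \<in> X Y)"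
| "msat U I f X (FNeg \<phi>) = (\<not> msat U I f X \<phi>)"
| "msat U I f X (FConj \<phi> \<psi>) = (msat U I f X \<phi> \<and> msat U I f X \<psi>)"
| "msat U I f X (FEx x \<phi>) = (\<exists>u\<in>U. msat U I (f(x := u)) X \<phi>)"
| "msat U I f X (SEx Y \<phi>) = (\<exists>A. A \<subseteq> U \<and> msat U I f (X(Y := A)) \<phi>)"

fun ffv :: "'r mso \<Rightarrow> nat set" where
  "ffv (Atom r xs) = set xs"
| "ffv (FEq x y) = {x, y}"
| "ffv (FMem x Y) = {x}"
| "ffv (FNeg \<phi>) = ffv \<phi>"
| "ffv (FConj \<phi> \<psi>) = ffv \<phi> \<union> ffv \<psi>"
| "ffv (FEx x \<phi>) = ffv \<phi> - {x}"
| "ffv (SEx Y \<phi>) = ffv \<phi>"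

fun sfv :: "'r mso \<Rightarrow> nat set" where
  "sfv (Atom r xs) = {}"
| "sfv (FEq x y) = {}"
| "sfv (FMem x Y) = {Y}"
| "sfv (FNeg \<phi>) = sfv \<phi>"
| "sfv (FConj \<phi> \<psi>) = sfv \<phi> \<union> sfv \<psi>"
| "sfv (FEx x \<phi>) = sfv \<phi>"
| "sfv (SEx Y \<phi>) = sfv \<phi> - {Y}"

definition mso_sentence :: "'r mso \<Rightarrow> bool" where
  "mso_sentence \<phi> \<longleftrightarrow> ffv \<phi> = {} \<and> sfv \<phi> = {}"

fun mso_over :: "('r \<Rightarrow> nat option) \<Rightarrow> 'r mso \<Rightarrow> bool" where
  "mso_over \<Sigma> (Atom r xs) = (\<Sigma> r = Some (length xs))"
| "mso_over \<Sigma> (FEq x y) = True"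
| "mso_over \<Sigma> (FMem x Y) = True"
| "mso_over \<Sigma> (FNeg \<phi>) = mso_over \<Sigma> \<phi>"
| "mso_over \<Sigma> (FConj \<phi> \<psi>) = (mso_over \<Sigma> \<phi> \<and> mso_over \<Sigma> \<psi>)"
| "mso_over \<Sigma> (FEx x \<phi>) = mso_over \<Sigma> \<phi>"
| "mso_over \<Sigma> (SEx Y \<phi>) = mso_over \<Sigma> \<phi>"

text \<open>Satisfaction of a sentence (assignments are irrelevant for sentences).\<close>
definition mmodels :: "'e set \<Rightarrow> ('r \<times> 'e list) set \<Rightarrow> 'r mso \<Rightarrow> bool" where
  "mmodels U I \<phi> = msat U I (\<lambda>_. undefined) (\<lambda>_. {}) \<phi>"

end

theory Submission
  imports Defs "HOL-Combinatorics.Permutations"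
begin

text \<open>Sources of \<open>val T\<close> are computed bottom-up: a leaf labelled \<open>c\<close> has the sources of the
  constant \<open>c\<close>, an \<open>append\<^sub>b\<close>-edge turns a \<open>q'\<close>-source at the old root into a \<open>q\<close>-source at the
  new one exactly when \<open>b\<close> does so for every graph (\<open>restrict\<^sub>\<sigma>\<close> keeps \<open>q \<in> \<sigma>\<close>, \<open>rename\<^sub>\<alpha>\<close>
  sends \<open>\<alpha> q\<close> to \<open>q\<close>), and fusing roots by \<open>\<parallel>\<close> takes unions. Hence the sets
  \<open>Y\<^sub>q = {n | the subterms at node n have a q-source}\<close> form the least family of node sets closed
  under one rule per unary label and one per binary label and pair of sources in \<open>\<tau>\<close>. As \<open>\<tau>\<close>
  and the parse alphabet are finite, "the root lies in \<open>Y\<^sub>s\<close> for every closed family" is an MSO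
  sentence.\<close>

lemma has_source_hr_zero [simp]: "has_source (hr_zero \<sigma>) q \<longleftrightarrow> q \<in> \<sigma>"
  by (simp add: has_source_def hr_zero_def)

lemma has_source_hr_edge [simp]: "has_source (hr_edge a ss) q \<longleftrightarrow> q \<in> set ss"
  by (simp add: has_source_def hr_edge_def)

lemma has_source_hr_restrict [simp]:
  "has_source (hr_restrict \<sigma> G) q \<longleftrightarrow> q \<in> \<sigma> \<and> has_source G q"
  by (simp add: has_source_def hr_restrict_def)

lemma has_source_hr_rename [simp]: "has_source (hr_rename \<alpha> G) q \<longleftrightarrow> has_source G (\<alpha> q)"
  by (simp add: has_source_def hr_rename_def)

lemma has_source_hr_par [simp]:
  "has_source (hr_par G H) q \<longleftrightarrow> has_source G q \<or> has_source H q"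
  by (simp add: has_source_def hr_par_def split: option.split)

lemma parse_tterm_simps [simp]:
  "parse_tterm ar \<tau> (TC c) \<longleftrightarrow> parse_unary ar \<tau> c"
  "parse_tterm ar \<tau> (TApp b t) \<longleftrightarrow> parse_binary \<tau> b \<and> parse_tterm ar \<tau> t"
  "parse_tterm ar \<tau> (TPar t1 t2) \<longleftrightarrow> parse_tterm ar \<tau> t1 \<and> parse_tterm ar \<tau> t2"
  by (simp_all add: parse_tterm_def)

lemma parse_binary_not_unary: "parse_binary \<tau> b \<Longrightarrow> \<not> parse_unary ar \<tau> b"
  by (cases b) simp_all

lemma has_source_val_in_sort:
  assumes "parse_tterm ar \<tau> t" and "has_source (val t) q"
  shows "q \<in> \<tau>"
  using assms
proof (induction t arbitrary: q)
  case (TC c)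
  then show ?case by (cases c) auto
next
  case (TApp b t)
  then show ?case by (cases b) auto
qed auto

definition passes_source :: "'a plabel \<Rightarrow> nat \<Rightarrow> nat \<Rightarrow> bool" where
  "passes_source b q' q \<longleftrightarrow> (\<forall>G. has_source G q' \<longrightarrow> has_source (hr_unop b G) q)"

lemma has_source_hr_unopE:
  assumes "parse_binary \<tau> b" and "has_source (hr_unop b G) q"
  obtains q' where "has_source G q'" and "passes_source b q' q"
  using assms by (cases b) (auto simp: passes_source_def)

lemma finite_parse_unary:
  fixes ar :: "'a::finite \<Rightarrow> nat"
  assumes "finite \<tau>"
  shows "finite {c. parse_unary ar \<tau> c}"
proof (rule finite_subset)
  show "{c. parse_unary ar \<tau> c} \<subseteq>
      PZero ` Pow \<tau> \<union> case_prod PEdge ` (UNIV \<times> {ss. set ss \<subseteq> \<tau> \<and> distinct ss})"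
    by (auto elim!: parse_unary.elims)
  show "finite (PZero ` Pow \<tau> \<union>
      case_prod PEdge ` ((UNIV :: 'a set) \<times> {ss. set ss \<subseteq> \<tau> \<and> distinct ss}))"
    using assms finite_subset_distinct[OF assms] by simp
qed

lemma finite_parse_binary:
  assumes "finite \<tau>"
  shows "finite {b. parse_binary \<tau> b}"
proof (rule finite_subset)
  show "{b. parse_binary \<tau> b} \<subseteq> PRestrict ` Pow \<tau> \<union> PRename ` {\<alpha>. \<alpha> permutes \<tau>}"
    by (auto elim!: parse_binary.elims simp: finite_perm_def permutes_def bij_iff)
  show "finite (PRestrict ` Pow \<tau> \<union> PRename ` {\<alpha>. \<alpha> permutes \<tau>})"
    using assms finite_permutations[OF assms] by simp
qed

definition subtree_nodes :: "nat list \<Rightarrow> telem set" where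
  "subtree_nodes p = range (\<lambda>z. Nd (p @ z))"

lemma Nd_in_subtree_nodes: "Nd p \<in> subtree_nodes p"
  by (metis append_Nil2 rangeI subtree_nodes_def)

lemma Nd_notin_subtree_nodes_snoc: "Nd p \<notin> subtree_nodes (p @ [i])"
  by (auto simp: subtree_nodes_def)

lemma subtree_nodes_snocD: "x \<in> subtree_nodes (p @ [i]) \<Longrightarrow> x \<in> subtree_nodes p"
  by (auto simp: subtree_nodes_def)

lemma subtree_nodes_snoc_disjoint:
  "i \<noteq> j \<Longrightarrow> subtree_nodes (p @ [i]) \<inter> subtree_nodes (p @ [j]) = {}"
  by (auto simp: subtree_nodes_def)

lemma Root_notin_subtree_nodes: "Root \<notin> subtree_nodes p"
  by (auto simp: subtree_nodes_def)

lemma root_in_tuniv: "r \<in> tuniv t p r"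
  by (induction t arbitrary: p r) auto

lemma tfacts_in_tuniv: "(R, xs) \<in> tfacts t p r \<Longrightarrow> set xs \<subseteq> tuniv t p r"
  by (induction t arbitrary: p r) (fastforce simp: root_in_tuniv)+

lemma tfacts_ternary_last: "(R, [e, n, m]) \<in> tfacts t p r \<Longrightarrow> m \<in> subtree_nodes p"
  by (induction t arbitrary: p r)
    (fastforce simp: Nd_in_subtree_nodes dest: subtree_nodes_snocD)+

lemma RRoot_notin_tfacts: "(RRoot, xs) \<notin> tfacts t p r"
  by (induction t arbitrary: p r) auto

lemma enc_rel_in_enc_univ: "(R, xs) \<in> enc_rel t \<Longrightarrow> set xs \<subseteq> enc_univ t"
  by (auto simp: enc_rel_def enc_univ_def root_in_tuniv dest: tfacts_in_tuniv)

lemma RRoot_in_enc_rel_iff: "(RRoot, xs) \<in> enc_rel t \<longleftrightarrow> xs = [Root]"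
  by (auto simp: enc_rel_def RRoot_notin_tfacts)

text \<open>In the encoding \<open>tfacts t p r\<close> of \<open>t\<close> with root \<open>r\<close>, the subterms hanging at node \<open>n\<close>
  (fused by \<open>\<parallel>\<close>) denote a graph with a \<open>q\<close>-source.\<close>

fun node_has_source :: "'a plabel tterm \<Rightarrow> nat list \<Rightarrow> telem \<Rightarrow> telem \<Rightarrow> nat \<Rightarrow> bool" where
  "node_has_source (TC c) p r n q \<longleftrightarrow> n = r \<and> has_source (hr_const c) q"
| "node_has_source (TApp b t) p r n q \<longleftrightarrow>
     n = r \<and> has_source (hr_unop b (val t)) q \<or> node_has_source t (p @ [2]) (Nd p) n q"
| "node_has_source (TPar t1 t2) p r n q \<longleftrightarrow>
     node_has_source t1 (p @ [0]) r n q \<or> node_has_source t2 (p @ [1]) r n q"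

lemma node_has_source_in_tuniv: "node_has_source t p r n q \<Longrightarrow> n \<in> tuniv t p r"
  by (induction t arbitrary: p r) auto

lemma node_has_source_at_root_or_subtree: "node_has_source t p r n q \<Longrightarrow> n = r \<or> n \<in> subtree_nodes p"
  by (induction t arbitrary: p r)
    (fastforce simp: Nd_in_subtree_nodes dest: subtree_nodes_snocD)+

lemma node_has_source_root:
  assumes "r \<notin> subtree_nodes p"
  shows "node_has_source t p r r q \<longleftrightarrow> has_source (val t) q"
  using assms
proof (induction t arbitrary: p r)
  case (TApp b t)
  have "\<not> node_has_source t (p @ [2]) (Nd p) r q"
    using node_has_source_at_root_or_subtree TApp.prems Nd_in_subtree_nodes subtree_nodes_snocD by blast
  then show ?case by simp
next
  case (TPar t1 t2)
  have "r \<notin> subtree_nodes (p @ [0])" "r \<notin> subtree_nodes (p @ [1])"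
    using TPar.prems subtree_nodes_snocD by blast+
  then show ?case using TPar.IH by simp
qed simp

lemma node_has_source_unary_fact:
  "(RLab c, [e, n]) \<in> tfacts t p r \<Longrightarrow> has_source (hr_const c) q \<Longrightarrow> node_has_source t p r n q"
  by (induction t arbitrary: p r) auto

lemma node_has_source_binary_fact:
  assumes "r \<notin> subtree_nodes p" and "(RLab b, [e, n, m]) \<in> tfacts t p r"
    and "passes_source b q' q" and "node_has_source t p r m q'"
  shows "node_has_source t p r n q"
  using assms
proof (induction t arbitrary: p r)
  case (TApp b0 t)
  have "Nd p \<notin> subtree_nodes (p @ [2])" "r \<noteq> Nd p"
    using TApp.prems(1) Nd_in_subtree_nodes Nd_notin_subtree_nodes_snoc by blast+
  show ?case
  proof (cases "(RLab b, [e, n, m]) \<in> tfacts t (p @ [2]) (Nd p)")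
    case True
    have "m \<in> subtree_nodes p"
      using tfacts_ternary_last True subtree_nodes_snocD by blast
    then have "node_has_source t (p @ [2]) (Nd p) m q'"
      using TApp.prems(1,4) by auto
    then show ?thesis using TApp.IH[OF \<open>Nd p \<notin> _\<close> True TApp.prems(3)] by simp
  next
    case False
    then have "b = b0" "n = r" "m = Nd p" using TApp.prems(2) by auto
    then have "has_source (val t) q'"
      using TApp.prems(4) \<open>r \<noteq> Nd p\<close> by (simp add: node_has_source_root[OF \<open>Nd p \<notin> _\<close>])
    then show ?thesis using TApp.prems(3) \<open>b = b0\<close> \<open>n = r\<close> by (simp add: passes_source_def)
  qed
next
  case (TPar t1 t2)
  show ?case
  proof (cases "(RLab b, [e, n, m]) \<in> tfacts t1 (p @ [0]) r")
    case True
    have "m \<in> subtree_nodes (p @ [0])" using tfacts_ternary_last True by blast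
    then have "\<not> node_has_source t2 (p @ [1]) r m q'"
      using TPar.prems(1) node_has_source_at_root_or_subtree subtree_nodes_snoc_disjoint subtree_nodes_snocD
      by fastforce
    then show ?thesis using TPar.IH(1) TPar.prems True subtree_nodes_snocD by fastforce
  next
    case False
    have "m \<in> subtree_nodes (p @ [1])" using tfacts_ternary_last False TPar.prems(2) by auto
    then have "\<not> node_has_source t1 (p @ [0]) r m q'"
      using TPar.prems(1) node_has_source_at_root_or_subtree subtree_nodes_snoc_disjoint subtree_nodes_snocD
      by fastforce
    then show ?thesis using TPar.IH(2) TPar.prems False subtree_nodes_snocD by fastforce
  qed
qed simp

definition rules_closed ::
    "('b \<times> nat) set \<Rightarrow> ('b \<times> nat \<times> nat) set \<Rightarrow> ('b rsym \<times> 'e list) set \<Rightarrow> (nat \<Rightarrow> 'e set) \<Rightarrow> bool"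
  where
  "rules_closed UR BR F Y \<longleftrightarrow>
     (\<forall>c q e n. (c, q) \<in> UR \<longrightarrow> (RLab c, [e, n]) \<in> F \<longrightarrow> n \<in> Y q) \<and>
     (\<forall>b q q' e n m. (b, q, q') \<in> BR \<longrightarrow> (RLab b, [e, n, m]) \<in> F \<longrightarrow> m \<in> Y q' \<longrightarrow> n \<in> Y q)"

lemma rules_closed_subset: "F' \<subseteq> F \<Longrightarrow> rules_closed UR BR F Y \<Longrightarrow> rules_closed UR BR F' Y"
  by (auto simp: rules_closed_def)

definition unary_rules :: "('a \<Rightarrow> nat) \<Rightarrow> nat set \<Rightarrow> ('a plabel \<times> nat) set" where
  "unary_rules ar \<tau> = {(c, q). parse_unary ar \<tau> c \<and> q \<in> \<tau> \<and> has_source (hr_const c) q}"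

definition binary_rules :: "nat set \<Rightarrow> ('a plabel \<times> nat \<times> nat) set" where
  "binary_rules \<tau> = {(b, q, q'). parse_binary \<tau> b \<and> q \<in> \<tau> \<and> q' \<in> \<tau> \<and> passes_source b q' q}"

lemma finite_unary_rules:
  fixes ar :: "'a::finite \<Rightarrow> nat"
  assumes "finite \<tau>"
  shows "finite (unary_rules ar \<tau>)"
proof (rule finite_subset)
  show "unary_rules ar \<tau> \<subseteq> {c. parse_unary ar \<tau> c} \<times> \<tau>"
    by (auto simp: unary_rules_def)
  show "finite ({c. parse_unary ar \<tau> c} \<times> \<tau>)"
    using assms finite_parse_unary[OF assms] by (rule finite_cartesian_product[rotated])
qed

lemma finite_binary_rules:
  assumes "finite \<tau>"
  shows "finite (binary_rules \<tau>)"
proof (rule finite_subset)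
  show "binary_rules \<tau> \<subseteq> {b. parse_binary \<tau> b} \<times> \<tau> \<times> \<tau>"
    by (auto simp: binary_rules_def)
  show "finite ({b. parse_binary \<tau> b} \<times> \<tau> \<times> \<tau>)"
    using assms finite_parse_binary[OF assms] by (intro finite_cartesian_product)
qed

lemma rules_closed_override_on:
  assumes "\<tau> \<subseteq> A"
  shows "rules_closed (unary_rules ar \<tau>) (binary_rules \<tau>) F (override_on X Y A) \<longleftrightarrow>
    rules_closed (unary_rules ar \<tau>) (binary_rules \<tau>) F Y"
proof -
  have "override_on X Y A q = Y q" if "q \<in> \<tau>" for q
    using assms that by auto
  then show ?thesis unfolding rules_closed_def unary_rules_def binary_rules_def by auto
qed

lemma has_source_imp_root_in_rules_closed:
  assumes "parse_tterm ar \<tau> t"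
    and "rules_closed (unary_rules ar \<tau>) (binary_rules \<tau>) (tfacts t p r) Y"
    and "has_source (val t) q"
  shows "r \<in> Y q"
  using assms
proof (induction t arbitrary: p r q)
  case (TC c)
  have "q \<in> \<tau>" using has_source_val_in_sort[OF TC.prems(1,3)] .
  with TC.prems have "(c, q) \<in> unary_rules ar \<tau>" by (simp add: unary_rules_def)
  with TC.prems(2) show ?case by (simp add: rules_closed_def)
next
  case (TApp b t)
  have b: "parse_binary \<tau> b" and t: "parse_tterm ar \<tau> t" using TApp.prems(1) by simp_all
  obtain q' where q': "has_source (val t) q'" and "passes_source b q' q"
    using has_source_hr_unopE[OF b] TApp.prems(3) by auto
  moreover have "q \<in> \<tau>" "q' \<in> \<tau>"
    using has_source_val_in_sort TApp.prems(1,3) t q' by blast+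
  ultimately have rule: "(b, q, q') \<in> binary_rules \<tau>" using b by (simp add: binary_rules_def)
  have "rules_closed (unary_rules ar \<tau>) (binary_rules \<tau>) (tfacts t (p @ [2]) (Nd p)) Y"
    by (rule rules_closed_subset[OF _ TApp.prems(2)]) auto
  then have "Nd p \<in> Y q'" using TApp.IH t q' by blast
  with rule TApp.prems(2) show ?case unfolding rules_closed_def by simp
next
  case (TPar t1 t2)
  have "rules_closed (unary_rules ar \<tau>) (binary_rules \<tau>) (tfacts t1 (p @ [0]) r) Y"
    "rules_closed (unary_rules ar \<tau>) (binary_rules \<tau>) (tfacts t2 (p @ [1]) r) Y"
    using rules_closed_subset[OF _ TPar.prems(2)] by simp_all
  with TPar show ?case by auto
qed

lemma node_has_source_rules_closed:
  assumes "r \<notin> subtree_nodes p"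
  shows "rules_closed (unary_rules ar \<tau>) (binary_rules \<tau>) (tfacts t p r)
    (\<lambda>q. {n. node_has_source t p r n q})"
  using node_has_source_unary_fact node_has_source_binary_fact[OF assms]
  by (auto simp: rules_closed_def unary_rules_def binary_rules_def)

definition FTrue :: "'r mso" where
  "FTrue = FNeg (FEx 0 (FNeg (FEq 0 0)))"

definition FImp :: "'r mso \<Rightarrow> 'r mso \<Rightarrow> 'r mso" where
  "FImp \<phi> \<psi> = FNeg (FConj \<phi> (FNeg \<psi>))"

definition FAll :: "nat \<Rightarrow> 'r mso \<Rightarrow> 'r mso" where
  "FAll x \<phi> = FNeg (FEx x (FNeg \<phi>))"

definition SAll :: "nat \<Rightarrow> 'r mso \<Rightarrow> 'r mso" where
  "SAll Y \<phi> = FNeg (SEx Y (FNeg \<phi>))"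

fun FConjs :: "'r mso list \<Rightarrow> 'r mso" where
  "FConjs [] = FTrue"
| "FConjs (\<phi> # \<phi>s) = FConj \<phi> (FConjs \<phi>s)"

lemma msat_derived [simp]:
  "msat U I f X FTrue"
  "msat U I f X (FImp \<phi> \<psi>) \<longleftrightarrow> (msat U I f X \<phi> \<longrightarrow> msat U I f X \<psi>)"
  "msat U I f X (FAll x \<phi>) \<longleftrightarrow> (\<forall>u\<in>U. msat U I (f(x := u)) X \<phi>)"
  "msat U I f X (SAll Y \<phi>) \<longleftrightarrow> (\<forall>A. A \<subseteq> U \<longrightarrow> msat U I f (X(Y := A)) \<phi>)"
  by (auto simp: FTrue_def FImp_def FAll_def SAll_def)

lemma free_vars_derived [simp]:
  "ffv FTrue = {}" "sfv FTrue = {}" "mso_over \<Sigma> FTrue"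
  "ffv (FImp \<phi> \<psi>) = ffv \<phi> \<union> ffv \<psi>" "sfv (FImp \<phi> \<psi>) = sfv \<phi> \<union> sfv \<psi>"
  "mso_over \<Sigma> (FImp \<phi> \<psi>) \<longleftrightarrow> mso_over \<Sigma> \<phi> \<and> mso_over \<Sigma> \<psi>"
  "ffv (FAll x \<phi>) = ffv \<phi> - {x}" "sfv (FAll x \<phi>) = sfv \<phi>" "mso_over \<Sigma> (FAll x \<phi>) = mso_over \<Sigma> \<phi>"
  "ffv (SAll Y \<phi>) = ffv \<phi>" "sfv (SAll Y \<phi>) = sfv \<phi> - {Y}" "mso_over \<Sigma> (SAll Y \<phi>) = mso_over \<Sigma> \<phi>"
  by (auto simp: FTrue_def FImp_def FAll_def SAll_def)

lemma FConjs_simps [simp]: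
  "msat U I f X (FConjs \<phi>s) \<longleftrightarrow> (\<forall>\<phi>\<in>set \<phi>s. msat U I f X \<phi>)"
  "ffv (FConjs \<phi>s) = (\<Union>\<phi>\<in>set \<phi>s. ffv \<phi>)"
  "sfv (FConjs \<phi>s) = (\<Union>\<phi>\<in>set \<phi>s. sfv \<phi>)"
  "mso_over \<Sigma> (FConjs \<phi>s) \<longleftrightarrow> (\<forall>\<phi>\<in>set \<phi>s. mso_over \<Sigma> \<phi>)"
  by (induction \<phi>s) auto

lemma foldr_SAll_simps [simp]:
  "ffv (foldr SAll Ys \<phi>) = ffv \<phi>"
  "sfv (foldr SAll Ys \<phi>) = sfv \<phi> - set Ys"
  "mso_over \<Sigma> (foldr SAll Ys \<phi>) \<longleftrightarrow> mso_over \<Sigma> \<phi>"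
  by (induction Ys) auto

lemma msat_foldr_SAll:
  "msat U I f X (foldr SAll Ys \<phi>) \<longleftrightarrow>
    (\<forall>A. (\<forall>Y\<in>set Ys. A Y \<subseteq> U) \<longrightarrow> msat U I f (override_on X A (set Ys)) \<phi>)"
proof (induction Ys arbitrary: X)
  case (Cons Y Ys)
  have shift: "override_on (X(Y := B)) A (set Ys) =
      override_on X (override_on (\<lambda>_. B) A (set Ys)) (set (Y # Ys))" for A B
    by (auto simp: override_on_def fun_eq_iff)
  show ?case
  proof
    assume all: "msat U I f X (foldr SAll (Y # Ys) \<phi>)"
    show "\<forall>A. (\<forall>Z\<in>set (Y # Ys). A Z \<subseteq> U) \<longrightarrow> msat U I f (override_on X A (set (Y # Ys))) \<phi>"
    proof (intro allI impI)
      fix A assume A: "\<forall>Z\<in>set (Y # Ys). A Z \<subseteq> U"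
      then have "msat U I f (X(Y := A Y)) (foldr SAll Ys \<phi>)" using all by simp
      moreover have "\<forall>Z\<in>set Ys. A Z \<subseteq> U" using A by simp
      ultimately have "msat U I f (override_on (X(Y := A Y)) A (set Ys)) \<phi>"
        using Cons.IH by blast
      then show "msat U I f (override_on X A (set (Y # Ys))) \<phi>"
        by (simp only: override_on_insert' set_simps)
    qed
  next
    assume all: "\<forall>A. (\<forall>Z\<in>set (Y # Ys). A Z \<subseteq> U) \<longrightarrow> msat U I f (override_on X A (set (Y # Ys))) \<phi>"
    have "msat U I f (X(Y := B)) (foldr SAll Ys \<phi>)" if B: "B \<subseteq> U" for B
      unfolding Cons.IH
    proof (intro allI impI)
      fix A assume "\<forall>Z\<in>set Ys. A Z \<subseteq> U"
      with B have "\<forall>Z\<in>set (Y # Ys). override_on (\<lambda>_. B) A (set Ys) Z \<subseteq> U"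
        by (simp add: override_on_def)
      with all show "msat U I f (override_on (X(Y := B)) A (set Ys)) \<phi>"
        unfolding shift by blast
    qed
    then show "msat U I f X (foldr SAll (Y # Ys) \<phi>)" by simp
  qed
qed simp

definition unary_clause :: "'b \<times> nat \<Rightarrow> 'b rsym mso" where
  "unary_clause = (\<lambda>(c, q). FAll 0 (FAll 1 (FImp (Atom (RLab c) [0, 1]) (FMem 1 q))))"

definition binary_clause :: "'b \<times> nat \<times> nat \<Rightarrow> 'b rsym mso" where
  "binary_clause = (\<lambda>(b, q, q'). FAll 0 (FAll 1 (FAll 2
     (FImp (Atom (RLab b) [0, 1, 2]) (FImp (FMem 2 q') (FMem 1 q))))))"

definition root_clause :: "nat \<Rightarrow> 'b rsym mso" where
  "root_clause s = FAll 0 (FImp (Atom RRoot [0]) (FMem 0 s))"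

definition closure_sentence ::
    "nat list \<Rightarrow> ('b \<times> nat) list \<Rightarrow> ('b \<times> nat \<times> nat) list \<Rightarrow> nat \<Rightarrow> 'b rsym mso" where
  "closure_sentence Ys ul bl s = foldr SAll Ys
     (FImp (FConj (FConjs (map unary_clause ul)) (FConjs (map binary_clause bl))) (root_clause s))"

lemma mso_sentence_closure_sentence:
  assumes "snd ` set ul \<subseteq> set Ys" and "fst ` snd ` set bl \<union> snd ` snd ` set bl \<subseteq> set Ys"
    and "s \<in> set Ys"
  shows "mso_sentence (closure_sentence Ys ul bl s)"
  using assms
  by (force simp: mso_sentence_def closure_sentence_def unary_clause_def binary_clause_def
      root_clause_def split: prod.splits)

lemma mso_over_closure_sentence:
  "mso_over \<Sigma> (closure_sentence Ys ul bl s) \<longleftrightarrow>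
     \<Sigma> RRoot = Some 1 \<and> (\<forall>(c, q) \<in> set ul. \<Sigma> (RLab c) = Some 2) \<and>
     (\<forall>(b, q, q') \<in> set bl. \<Sigma> (RLab b) = Some 3)"
  by (auto simp: closure_sentence_def unary_clause_def binary_clause_def root_clause_def
      split: prod.splits)

lemma msat_closure_sentence:
  assumes "\<And>R xs. (R, xs) \<in> I \<Longrightarrow> set xs \<subseteq> U"
  shows "msat U I f X (closure_sentence Ys ul bl s) \<longleftrightarrow>
    (\<forall>A. (\<forall>Y\<in>set Ys. A Y \<subseteq> U) \<longrightarrow> rules_closed (set ul) (set bl) I (override_on X A (set Ys)) \<longrightarrow>
       (\<forall>u. (RRoot, [u]) \<in> I \<longrightarrow> u \<in> override_on X A (set Ys) s))"
proof -
  have "msat U I f X' (FConj (FConjs (map unary_clause ul)) (FConjs (map binary_clause bl)))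
      \<longleftrightarrow> rules_closed (set ul) (set bl) I X'"
    "msat U I f X' (root_clause s) \<longleftrightarrow> (\<forall>u. (RRoot, [u]) \<in> I \<longrightarrow> u \<in> X' s)" for X'
    using assms
    by (fastforce simp: rules_closed_def unary_clause_def binary_clause_def root_clause_def)+
  then show ?thesis by (simp add: closure_sentence_def msat_foldr_SAll)
qed

lemma enc_models_closure_sentence_iff:
  assumes t: "parse_tterm ar \<tau> t" and Ys: "set Ys = insert s \<tau>"
    and ul: "set ul = unary_rules ar \<tau>" and bl: "set bl = binary_rules \<tau>"
  shows "mmodels (enc_univ t) (enc_rel t) (closure_sentence Ys ul bl s) \<longleftrightarrow> has_source (val t) s"
proof -
  let ?closed = "rules_closed (unary_rules ar \<tau>) (binary_rules \<tau>)"
  have closed_enc_rel: "?closed (enc_rel t) Y \<longleftrightarrow> ?closed (tfacts t [] Root) Y" for Y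
    by (simp add: rules_closed_def enc_rel_def)
  txt \<open>Quantifying over \<open>Y\<^sub>s\<close> too covers \<open>s \<notin> \<tau>\<close>: no rule constrains \<open>Y\<^sub>s\<close> then.\<close>
  have "mmodels (enc_univ t) (enc_rel t) (closure_sentence Ys ul bl s) \<longleftrightarrow>
      (\<forall>A. (\<forall>Y\<in>insert s \<tau>. A Y \<subseteq> enc_univ t) \<longrightarrow> ?closed (tfacts t [] Root) A \<longrightarrow> Root \<in> A s)"
    by (simp add: mmodels_def msat_closure_sentence[OF enc_rel_in_enc_univ] Ys ul bl
        rules_closed_override_on[OF subset_insertI]
        closed_enc_rel RRoot_in_enc_rel_iff)
  also have "\<dots> \<longleftrightarrow> has_source (val t) s"
  proof
    assume least: "\<forall>A. (\<forall>Y\<in>insert s \<tau>. A Y \<subseteq> enc_univ t) \<longrightarrow> ?closed (tfacts t [] Root) A \<longrightarrow>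
      Root \<in> A s"
    have "Root \<in> {n. node_has_source t [] Root n s}"
      using least[rule_format, OF _ node_has_source_rules_closed[OF Root_notin_subtree_nodes]]
        node_has_source_in_tuniv by (fastforce simp: enc_univ_def)
    then show "has_source (val t) s"
      by (simp add: node_has_source_root[OF Root_notin_subtree_nodes])
  qed (use t has_source_imp_root_in_rules_closed in blast)
  finally show ?thesis .
qed

theorem lemma5p6:
  fixes ar :: "'a::finite \<Rightarrow> nat" and \<tau> :: "nat set" and s :: nat
  assumes "finite \<tau>"
  shows "\<exists>\<phi> :: 'a plabel rsym mso.
           mso_sentence \<phi> \<and> mso_over (rtree_parse_ar ar \<tau>) \<phi> \<and>
           (\<forall>t. parse_tterm ar \<tau> t \<longrightarrow>
                (mmodels (enc_univ t) (enc_rel t) \<phi> \<longleftrightarrow> has_source (val t) s))"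
proof -
  obtain Ys where Ys: "set Ys = insert s \<tau>"
    using assms finite_list finite_insert by metis
  obtain ul where ul: "set ul = unary_rules ar \<tau>"
    using finite_unary_rules[OF assms] finite_list by blast
  obtain bl :: "('a plabel \<times> nat \<times> nat) list" where bl: "set bl = binary_rules \<tau>"
    using finite_binary_rules[OF assms] finite_list by blast
  have "mso_sentence (closure_sentence Ys ul bl s)"
    by (rule mso_sentence_closure_sentence) (auto simp: Ys ul bl unary_rules_def binary_rules_def)
  moreover have "mso_over (rtree_parse_ar ar \<tau>) (closure_sentence Ys ul bl s)"
    by (auto simp: mso_over_closure_sentence ul bl unary_rules_def binary_rules_def
        dest: parse_binary_not_unary)
  ultimately show ?thesis
    using enc_models_closure_sentence_iff[OF _ Ys ul bl] by blast
qed

end
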